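(* Let $\pi$ be a projective plane of order $q$ and let $n>1$ be a natural number. Then for any embedding $\phi$ of the complete bipartite graph $K_{q-n,\,n^2+n+1}$ into $\pi$, the image $\phi(W)$ of the vertex class $W$ of size $n^2+n+1$ is either the point set of a subplane of $\pi$ of order $n$, or a set of points lying on a single line.
   Context: A finite projective plane of order $q$ has $q^2+q+1$ points and lines, $q+1$ points on each line and $q+1$ lines through each point; any two distinct points lie on a unique line and any two lines meet in a unique point. An embedding of a simple graph $G=(V,E)$ into $\pi$ is an injective map $\phi$ from $V$ to the points of $\pi$ such that the induced map sending an edge $ab$ to the line through $\phi(a),\phi(b)$ is injective on $E$. A subplane of order $n$ of $\pi$ is a set of points and lines of $\pi$ which, with the inherited incidence, forms a projective plane of order $n$. *)

theory Defs
  imports Main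
begin

definition projective_plane ::
  "'p set \<Rightarrow> 'l set \<Rightarrow> ('p \<Rightarrow> 'l \<Rightarrow> bool) \<Rightarrow> nat \<Rightarrow> bool" where
  "projective_plane P L I q \<longleftrightarrow>
     finite P \<and> finite L \<and>
     card P = q^2 + q + 1 \<and> card L = q^2 + q + 1 \<and>
     (\<forall>l\<in>L. card {x\<in>P. I x l} = q + 1) \<and>
     (\<forall>x\<in>P. card {l\<in>L. I x l} = q + 1) \<and>
     (\<forall>x\<in>P. \<forall>y\<in>P. x \<noteq> y \<longrightarrow> (\<exists>!l. l \<in> L \<and> I x l \<and> I y l)) \<and>
     (\<forall>l\<in>L. \<forall>m\<in>L. l \<noteq> m \<longrightarrow> (\<exists>!x. x \<in> P \<and> I x l \<and> I x m))"

definition edge_line ::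
  "'l set \<Rightarrow> ('p \<Rightarrow> 'l \<Rightarrow> bool) \<Rightarrow> ('v \<Rightarrow> 'p) \<Rightarrow> 'v set \<Rightarrow> 'l" where
  "edge_line L I \<phi> e = (THE l. l \<in> L \<and> (\<forall>v\<in>e. I (\<phi> v) l))"

definition graph_embedding ::
  "'v set \<Rightarrow> 'v set set \<Rightarrow> 'p set \<Rightarrow> 'l set \<Rightarrow> ('p \<Rightarrow> 'l \<Rightarrow> bool) \<Rightarrow> ('v \<Rightarrow> 'p) \<Rightarrow> bool" where
  "graph_embedding V E P L I \<phi> \<longleftrightarrow>
     \<phi> ` V \<subseteq> P \<and> inj_on \<phi> V \<and> inj_on (edge_line L I \<phi>) E"

definition bipartite_edges :: "'v set \<Rightarrow> 'v set \<Rightarrow> 'v set set" where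
  "bipartite_edges U W = {{u, w} | u w. u \<in> U \<and> w \<in> W}"

definition is_subplane_points ::
  "'p set \<Rightarrow> 'l set \<Rightarrow> ('p \<Rightarrow> 'l \<Rightarrow> bool) \<Rightarrow> nat \<Rightarrow> 'p set \<Rightarrow> bool" where
  "is_subplane_points P L I n S \<longleftrightarrow>
     S \<subseteq> P \<and> (\<exists>M \<subseteq> L. projective_plane S M I n)"

definition collinear_set :: "'l set \<Rightarrow> ('p \<Rightarrow> 'l \<Rightarrow> bool) \<Rightarrow> 'p set \<Rightarrow> bool" where
  "collinear_set L I S \<longleftrightarrow> (\<exists>l\<in>L. \<forall>x\<in>S. I x l)"

end

theory Submission
  imports Defs
begin

text \<open>Let \<open>S = \<phi> ` W\<close>. Every point of \<open>S\<close> is joined to the \<open>q - n\<close> points of \<open>\<phi> ` U\<close> by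
  pairwise distinct lines that contain no further point of \<open>S\<close>, so it lies on at most \<open>n + 1\<close>
  secants of \<open>S\<close>, i.e. lines meeting \<open>S\<close> in at least two points. If \<open>S\<close> is not collinear,
  projecting a secant from a point of \<open>S\<close> off it shows that a secant carries at most \<open>n + 1\<close>
  points of \<open>S\<close>. Counting \<open>S - {w}\<close> along the secants through \<open>w\<close> then forces exactly
  \<open>n + 1\<close> secants through every point and exactly \<open>n + 1\<close> points on every secant; double
  counting gives as many secants as points, and projection again shows that two secants meet
  in \<open>S\<close>. So \<open>S\<close> with its secants is a projective plane of order \<open>n\<close>.\<close>

lemma two_le_cardE:
  assumes "2 \<le> card A"
  obtains a b where "a \<in> A" "b \<in> A" "a \<noteq> b"
proof -
  have "finite A" "\<not> card A \<le> Suc 0" using assms card.infinite by fastforce+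
  then show ?thesis using that card_le_Suc0_iff_eq by blast
qed

lemma sum_card_filter_comm:
  assumes "finite A" "finite B"
  shows "(\<Sum>a\<in>A. card {b\<in>B. R a b}) = (\<Sum>b\<in>B. card {a\<in>A. R a b})"
proof -
  have "\<And>a. card {b\<in>B. R a b} = (\<Sum>b\<in>B. if R a b then 1 else 0)"
       "\<And>b. card {a\<in>A. R a b} = (\<Sum>a\<in>A. if R a b then 1 else 0)"
    using assms by (simp_all add: sum.inter_filter[symmetric])
  then show ?thesis by (simp add: sum.swap[of _ A])
qed

locale proj_plane =
  fixes P :: "'p set" and L :: "'l set" and I :: "'p \<Rightarrow> 'l \<Rightarrow> bool" and q :: nat
  assumes projective_plane: "projective_plane P L I q"
begin

lemma finite_lines: "finite L"
  and card_lines_through: "x \<in> P \<Longrightarrow> card {l\<in>L. I x l} = q + 1"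
  and ex1_line: "x \<in> P \<Longrightarrow> y \<in> P \<Longrightarrow> x \<noteq> y \<Longrightarrow> \<exists>!l. l \<in> L \<and> I x l \<and> I y l"
  and ex1_point: "l \<in> L \<Longrightarrow> m \<in> L \<Longrightarrow> l \<noteq> m \<Longrightarrow> \<exists>!x. x \<in> P \<and> I x l \<and> I x m"
  using projective_plane unfolding projective_plane_def by auto

lemma line_eqI:
  assumes "x \<in> P" "y \<in> P" "x \<noteq> y" "l \<in> L" "m \<in> L" "I x l" "I y l" "I x m" "I y m"
  shows "l = m"
  using ex1_line[OF assms(1-3)] assms(4-9) by blast

definition join :: "'p \<Rightarrow> 'p \<Rightarrow> 'l" where
  "join x y = (THE l. l \<in> L \<and> I x l \<and> I y l)"

lemma join:
  assumes "x \<in> P" "y \<in> P" "x \<noteq> y"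
  shows "join x y \<in> L" "I x (join x y)" "I y (join x y)"
  using theI'[OF ex1_line[OF assms]] unfolding join_def by auto

lemma join_eqI:
  assumes "x \<in> P" "y \<in> P" "x \<noteq> y" "l \<in> L" "I x l" "I y l"
  shows "join x y = l"
  using line_eqI[OF assms(1-3) join(1)[OF assms(1-3)] assms(4) join(2,3)[OF assms(1-3)] assms(5,6)] .

lemma edge_line_eq_join:
  assumes "\<phi> u \<in> P" "\<phi> w \<in> P" "\<phi> u \<noteq> \<phi> w"
  shows "edge_line L I \<phi> {u, w} = join (\<phi> u) (\<phi> w)"
  unfolding edge_line_def join_def by (rule arg_cong[where f = The]) auto

lemma inj_on_join_line:
  assumes "x \<in> P" "l \<in> L" "\<not> I x l"
  shows "inj_on (join x) {y\<in>P. I y l}"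
proof (rule inj_onI, rule ccontr)
  fix y y' assume y: "y \<in> {y\<in>P. I y l}" "y' \<in> {y\<in>P. I y l}" "join x y = join x y'" "y \<noteq> y'"
  have "x \<noteq> y" "x \<noteq> y'" using assms(3) y by auto
  with assms y have "join x y = l"
    by (metis (no_types, lifting) join line_eqI mem_Collect_eq)
  with join(2)[OF assms(1) _ \<open>x \<noteq> y\<close>] assms(3) y(1) show False by auto
qed

definition secants :: "'p set \<Rightarrow> 'l set" where
  "secants S = {l\<in>L. 2 \<le> card {x\<in>S. I x l}}"

lemma secants_subset: "secants S \<subseteq> L"
  unfolding secants_def by simp

lemma finite_secants: "finite (secants S)"
  using finite_lines secants_subset by (rule finite_subset[rotated])

lemma join_in_secants:
  assumes "finite S" "S \<subseteq> P" "x \<in> S" "y \<in> S" "x \<noteq> y"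
  shows "join x y \<in> secants S"
proof -
  have xy: "x \<in> P" "y \<in> P" using assms by auto
  have "{x, y} \<subseteq> {z\<in>S. I z (join x y)}" using join[OF xy assms(5)] assms by auto
  then have "card {x, y} \<le> card {z\<in>S. I z (join x y)}" using assms(1) by (simp add: card_mono)
  then show ?thesis using assms(5) join(1)[OF xy assms(5)] unfolding secants_def by simp
qed

lemma secant_other_point:
  assumes "l \<in> secants S"
  obtains y where "y \<in> S" "y \<noteq> w" "I y l"
proof -
  have "2 \<le> card {x\<in>S. I x l}" using assms unfolding secants_def by simp
  then obtain a b where "a \<in> {x\<in>S. I x l}" "b \<in> {x\<in>S. I x l}" "a \<noteq> b"
    by (rule two_le_cardE)
  with that show ?thesis by (cases "a = w") auto
qed

lemma projection_to_secants:
  assumes "finite S" "S \<subseteq> P" "x \<in> S" "l \<in> L" "\<not> I x l"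
  shows "inj_on (join x) {y\<in>S. I y l}" "join x ` {y\<in>S. I y l} \<subseteq> {k\<in>secants S. I x k}"
proof -
  show "inj_on (join x) {y\<in>S. I y l}"
    using inj_on_join_line[of x l] assms by (blast intro: inj_on_subset)
  show "join x ` {y\<in>S. I y l} \<subseteq> {k\<in>secants S. I x k}"
  proof
    fix k assume "k \<in> join x ` {y\<in>S. I y l}"
    then obtain y where y: "y \<in> S" "I y l" "k = join x y" by blast
    then have "x \<noteq> y" using assms(5) by auto
    with assms y show "k \<in> {k\<in>secants S. I x k}"
      using join_in_secants[of S x y] join(2)[of x y] by auto
  qed
qed

lemma card_remove_eq_sum_secants:
  assumes "finite S" "S \<subseteq> P" "w \<in> S"
  shows "card (S - {w}) = (\<Sum>l\<in>{l\<in>secants S. I w l}. card {x\<in>S. I x l} - 1)"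
proof -
  let ?A = "{l\<in>secants S. I w l}"
  have partition: "S - {w} = (\<Union>l\<in>?A. {x\<in>S. I x l} - {w})"
  proof (intro equalityI subsetI)
    fix y assume y: "y \<in> S - {w}"
    then have wy: "w \<in> P" "y \<in> P" "w \<noteq> y" using assms by auto
    with y have "join w y \<in> ?A" "I y (join w y)"
      using join_in_secants[OF assms(1-3), of y] join(2,3)[OF wy] by auto
    with y show "y \<in> (\<Union>l\<in>?A. {x\<in>S. I x l} - {w})" by blast
  qed auto
  have disjoint: "({x\<in>S. I x l} - {w}) \<inter> ({x\<in>S. I x l'} - {w}) = {}"
    if "l \<in> ?A" "l' \<in> ?A" "l \<noteq> l'" for l l'
  proof (rule ccontr)
    assume "\<not> ?thesis"
    then obtain y where "y \<in> S" "y \<noteq> w" "I y l" "I y l'" by blast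
    with that assms line_eqI[of w y l l'] show False unfolding secants_def by auto
  qed
  have "card (S - {w}) = (\<Sum>l\<in>?A. card ({x\<in>S. I x l} - {w}))"
    unfolding partition using assms(1) finite_secants disjoint by (intro card_UN_disjoint) auto
  also have "\<dots> = (\<Sum>l\<in>?A. card {x\<in>S. I x l} - 1)"
    using assms(1,3) by (intro sum.cong) auto
  finally show ?thesis .
qed

end

locale bipartite_embedding = proj_plane +
  fixes U W and \<phi>
  assumes embedding: "graph_embedding (U \<union> W) (bipartite_edges U W) P L I \<phi>"
    and classes_disjoint: "U \<inter> W = {}"
begin

lemma embedded_point: "v \<in> U \<union> W \<Longrightarrow> \<phi> v \<in> P"
  using embedding unfolding graph_embedding_def by blast

lemma embedded_distinct:
  assumes "u \<in> U" "w \<in> W"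
  shows "\<phi> u \<noteq> \<phi> w"
proof
  assume "\<phi> u = \<phi> w"
  then have "u = w"
    using embedding assms inj_onD[of \<phi> "U \<union> W" u w] unfolding graph_embedding_def by blast
  with assms classes_disjoint show False by blast
qed

lemma edge_line_embedded:
  assumes "u \<in> U" "w \<in> W"
  shows "edge_line L I \<phi> {u, w} = join (\<phi> u) (\<phi> w)"
  using assms by (intro edge_line_eq_join embedded_point embedded_distinct) auto

lemma join_embedded_inj:
  assumes "u \<in> U" "u' \<in> U" "w \<in> W" "w' \<in> W"
    and "join (\<phi> u) (\<phi> w) = join (\<phi> u') (\<phi> w')"
  shows "u = u' \<and> w = w'"
proof -
  have edges: "{u, w} \<in> bipartite_edges U W" "{u', w'} \<in> bipartite_edges U W"
    using assms unfolding bipartite_edges_def by auto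
  have "edge_line L I \<phi> {u, w} = edge_line L I \<phi> {u', w'}"
    using edge_line_embedded[OF assms(1,3)] edge_line_embedded[OF assms(2,4)] assms(5) by simp
  then have "{u, w} = {u', w'}"
    using embedding edges unfolding graph_embedding_def by (blast dest: inj_onD)
  with assms classes_disjoint show ?thesis by (auto simp: doubleton_eq_iff)
qed

lemma secants_through_embedded_le:
  assumes w: "w \<in> W"
  shows "card {l\<in>secants (\<phi> ` W). I (\<phi> w) l} + card U \<le> q + 1"
proof -
  let ?Sec = "{l\<in>secants (\<phi> ` W). I (\<phi> w) l}" and ?T = "{l\<in>L. I (\<phi> w) l}"
  define g where "g u = join (\<phi> u) (\<phi> w)" for u
  have g: "g u \<in> L" "I (\<phi> u) (g u)" "I (\<phi> w) (g u)" if "u \<in> U" for u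
    using join[OF embedded_point embedded_point embedded_distinct[OF that w]] that w
    unfolding g_def by auto
  have inj: "inj_on g U"
    using join_embedded_inj w unfolding g_def by (intro inj_onI) blast
  have "g u \<notin> ?Sec" if u: "u \<in> U" for u
  proof
    assume "g u \<in> ?Sec"
    then obtain y where "y \<in> \<phi> ` W" "y \<noteq> \<phi> w" "I y (g u)"
      by (blast elim: secant_other_point)
    then obtain w' where w': "w' \<in> W" "w' \<noteq> w" "I (\<phi> w') (g u)" by blast
    have "\<phi> u \<in> P" "\<phi> w' \<in> P" using u w' embedded_point by blast+
    then have "join (\<phi> u) (\<phi> w') = join (\<phi> u) (\<phi> w)"
      using join_eqI embedded_distinct[OF u w'(1)] g[OF u] w'(3) unfolding g_def by blast
    with join_embedded_inj u w w' show False by blast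
  qed
  then have disjoint: "?Sec \<inter> g ` U = {}" by blast
  have sub: "?Sec \<union> g ` U \<subseteq> ?T" using g secants_subset by blast
  have fin: "finite ?T" using finite_lines by simp
  have "card ?Sec + card U = card (?Sec \<union> g ` U)"
    using card_Un_disjoint[OF finite_subset[OF _ fin] finite_subset[OF _ fin] disjoint] sub
      card_image[OF inj] by simp
  also have "\<dots> \<le> card ?T" using card_mono[OF fin sub] .
  also have "\<dots> = q + 1" using card_lines_through embedded_point w by simp
  finally show ?thesis .
qed

end

locale few_secants = proj_plane +
  fixes S and n :: nat
  assumes points_subset: "S \<subseteq> P"
    and card_points: "card S = n^2 + n + 1"
    and order_gt_1: "n > 1"
    and not_collinear: "\<not> collinear_set L I S"
    and secants_through_le: "w \<in> S \<Longrightarrow> card {l\<in>secants S. I w l} \<le> n + 1"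
begin

lemma finite_points: "finite S"
  using card_points card.infinite by fastforce

lemma card_secant_le:
  assumes "l \<in> secants S"
  shows "card {x\<in>S. I x l} \<le> n + 1"
proof -
  obtain x where x: "x \<in> S" "\<not> I x l"
    using not_collinear assms unfolding collinear_set_def secants_def by auto
  have "l \<in> L" using assms unfolding secants_def by simp
  note proj = projection_to_secants[OF finite_points points_subset x(1) this x(2)]
  have "card {x\<in>S. I x l} \<le> card {k\<in>secants S. I x k}"
    using card_inj_on_le[OF proj] finite_secants by simp
  with secants_through_le[OF x(1)] show ?thesis by linarith
qed

lemma secants_through_point:
  assumes "w \<in> S"
  shows "card {l\<in>secants S. I w l} = n + 1"
    and "l \<in> secants S \<Longrightarrow> I w l \<Longrightarrow> card {x\<in>S. I x l} = n + 1"
proof -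
  let ?A = "{l\<in>secants S. I w l}" and ?f = "\<lambda>l. card {x\<in>S. I x l} - 1"
  have finA: "finite ?A" using finite_secants by simp
  have f_le: "\<forall>l\<in>?A. ?f l \<le> n" using card_secant_le by fastforce
  have sum_eq: "sum ?f ?A = n * n + n"
    using card_remove_eq_sum_secants[OF finite_points points_subset assms]
      card_points finite_points assms by (simp add: power2_eq_square)
  have "sum ?f ?A \<le> card ?A * n" using sum_bounded_above[of ?A ?f n] f_le by simp
  then have "(n + 1) * n \<le> card ?A * n" using sum_eq by (simp add: algebra_simps)
  then have "n + 1 \<le> card ?A" using order_gt_1 by (simp only: mult_le_cancel2)
  then show cardA: "card ?A = n + 1" using secants_through_le[OF assms] by simp
  have "\<forall>l\<in>?A. ?f l = n"
  proof (rule ccontr)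
    assume "\<not> ?thesis"
    then have "sum ?f ?A < sum (\<lambda>_. n) ?A" using f_le finA
      by (intro sum_strict_mono_ex1) (auto simp: le_neq_implies_less)
    then show False using sum_eq cardA by (simp add: algebra_simps)
  qed
  moreover assume "l \<in> secants S" "I w l"
  ultimately show "card {x\<in>S. I x l} = n + 1"
    unfolding secants_def by fastforce
qed

lemma card_secant:
  assumes "l \<in> secants S"
  shows "card {x\<in>S. I x l} = n + 1"
proof -
  have "2 \<le> card {x\<in>S. I x l}" using assms unfolding secants_def by simp
  then obtain w where "w \<in> {x\<in>S. I x l}" by (rule two_le_cardE)
  with assms show ?thesis using secants_through_point(2) by blast
qed

lemma card_secants: "card (secants S) = n^2 + n + 1"
proof -
  have "card S * (n + 1) = (\<Sum>w\<in>S. card {l\<in>secants S. I w l})"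
    using secants_through_point(1) by simp
  also have "\<dots> = (\<Sum>l\<in>secants S. card {x\<in>S. I x l})"
    by (rule sum_card_filter_comm[OF finite_points finite_secants])
  also have "\<dots> = card (secants S) * (n + 1)"
    using card_secant by simp
  finally have "card S * (n + 1) = card (secants S) * (n + 1)" .
  then show ?thesis using card_points by (simp only: mult_cancel2) simp
qed

lemma secants_meet:
  assumes "l \<in> secants S" "m \<in> secants S" "l \<noteq> m"
  shows "\<exists>!x. x \<in> S \<and> I x l \<and> I x m"
proof -
  have lm: "l \<in> L" "m \<in> L" using assms unfolding secants_def by auto
  have "2 \<le> card {x\<in>S. I x l}" using assms(1) unfolding secants_def by simp
  then obtain a b where ab: "a \<in> S" "b \<in> S" "I a l" "I b l" "a \<noteq> b"
    by (rule two_le_cardE) auto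
  have "\<not> (I a m \<and> I b m)"
    using ab lm assms(3) points_subset line_eqI[of a b l m] by auto
  then obtain x where x: "x \<in> S" "I x l" "\<not> I x m"
    using ab by auto
  note proj = projection_to_secants[OF finite_points points_subset x(1) lm(2) x(3)]
  have "card (join x ` {y\<in>S. I y m}) = card {k\<in>secants S. I x k}"
    using card_image[OF proj(1)] card_secant[OF assms(2)] secants_through_point(1)[OF x(1)]
    by simp
  moreover have "finite {k\<in>secants S. I x k}" using finite_secants by simp
  ultimately have "join x ` {y\<in>S. I y m} = {k\<in>secants S. I x k}"
    using card_subset_eq[OF _ proj(2)] by blast
  then have "l \<in> join x ` {y\<in>S. I y m}" using assms(1) x(2) by simp
  then obtain y where y: "y \<in> S" "I y m" "l = join x y" by blast
  then have "I y l" using x points_subset join(3)[of x y] by auto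
  moreover have "z = y" if "z \<in> S" "I z l" "I z m" for z
  proof -
    have "z \<in> P" "y \<in> P" using that(1) y(1) points_subset by auto
    then show "z = y" using ex1_point[OF lm assms(3)] that(2,3) y(2) \<open>I y l\<close> by blast
  qed
  ultimately show ?thesis using y(1,2) by blast
qed

lemma unique_secant:
  assumes "x \<in> S" "y \<in> S" "x \<noteq> y"
  shows "\<exists>!l. l \<in> secants S \<and> I x l \<and> I y l"
proof (rule ex1I[of _ "join x y"])
  have xy: "x \<in> P" "y \<in> P" using assms points_subset by auto
  show "join x y \<in> secants S \<and> I x (join x y) \<and> I y (join x y)"
    using join_in_secants[OF finite_points points_subset assms] join(2,3)[OF xy assms(3)] by simp
  show "l = join x y" if "l \<in> secants S \<and> I x l \<and> I y l" for l
    using join_eqI[OF xy assms(3)] that secants_subset by auto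
qed

lemma subplane: "is_subplane_points P L I n S"
proof -
  have "projective_plane S (secants S) I n"
    unfolding projective_plane_def
    by (intro conjI ballI impI)
      (simp_all add: finite_points finite_secants card_points card_secants card_secant
        secants_through_point(1) secants_meet unique_secant)
  then show ?thesis
    unfolding is_subplane_points_def using points_subset secants_subset by blast
qed

end

theorem theorem4p4:
  fixes P :: "'p set" and L :: "'l set" and I :: "'p \<Rightarrow> 'l \<Rightarrow> bool"
    and q n :: nat and U W :: "'v set" and \<phi> :: "'v \<Rightarrow> 'p"
  assumes "projective_plane P L I q"
    and "n > 1" and "n \<le> q"
    and "finite U" and "finite W" and "U \<inter> W = {}"
    and "card U = q - n" and "card W = n^2 + n + 1"
    and "graph_embedding (U \<union> W) (bipartite_edges U W) P L I \<phi>"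
  shows "is_subplane_points P L I n (\<phi> ` W) \<or> collinear_set L I (\<phi> ` W)"
proof (rule disjCI)
  assume not_collinear: "\<not> collinear_set L I (\<phi> ` W)"
  interpret bipartite_embedding P L I q U W \<phi>
    using assms(1,6,9) by unfold_locales
  have inj: "inj_on \<phi> W" "\<phi> ` W \<subseteq> P"
    using assms(9) inj_on_subset unfolding graph_embedding_def by blast+
  have "few_secants P L I q (\<phi> ` W) n"
  proof
    show "card (\<phi> ` W) = n^2 + n + 1" using card_image[OF inj(1)] assms(8) by simp
    show "card {l\<in>secants (\<phi> ` W). I x l} \<le> n + 1" if "x \<in> \<phi> ` W" for x
      using that secants_through_embedded_le assms(3,7) by fastforce
  qed (use inj assms(2) not_collinear in auto)
  then show "is_subplane_points P L I n (\<phi> ` W)" by (rule few_secants.subplane)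
qed

end
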